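(* Let $C>0$ and let $\varphi_{0,i}(u,v,z)=r^{p_i}z^{q_i}$, $i=1,2$, where $r=\sqrt{u^2+v^2}$. Then for all $r_*>0$ sufficiently large, on $\mathcal{R}_0=\{(u,v,z): r\ge r_*,\ Cu\ge|v|,\ 0<z\le1\}$ one has $\mathcal{L}\varphi_{0,i}(u,v,z)\le-\gamma p_ir^{p_i}z^{q_i}-\frac{\beta_i}{2\sqrt{1+C^2}}r^{p_i+1}z^{q_i-2/3}$, $i=1,2$, and for all $(u,v,1)\in\mathcal{R}_0$, $\mathcal{Q}(\varphi_{0,1}+\varphi_{0,2})(u,v,1)\le-\left(\tfrac{q_2}{2}-\tfrac{p_2}{6}\right)r^{p_2}.$
   Context: Fix $\gamma>0$, $h\in(0,1)$, $\kappa_1,\kappa_2>0$ and $\alpha_h=\frac13+\frac23h$. Constants $p_i,q_i,\alpha_i,\beta_i$ ($i=1,2$) satisfy $p_1>0$, $p_2>0$, $q_1=0$, $q_2>0$, $0<\alpha_hp_i-(1-h)q_i=\beta_i<\alpha_i<1$, $q_2>\frac13p_2+\frac12\alpha_2$, $p_2>p_1$, $p_2+\frac32\alpha_2>p_1+\frac32\alpha_1$. On $\mathbb{R}\times\mathbb{R}\times(0,1]$ define the differential operators $\mathcal{L}=-\gamma u\partial_u-\gamma v\partial_v-\frac{\alpha_hu^2-v^2}{z^{2/3}}\partial_u-(\alpha_h+1)\frac{uv}{z^{2/3}}\partial_v+(1-h)uz^{1/3}\partial_z+\frac{\kappa_1}{z^{2/3}}\partial_u^2+\frac{\kappa_2}{z^{2/3}}\partial_v^2$,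 $\mathcal{Q}=\frac{u}{3z}\partial_u+\frac{v}{3z}\partial_v-\partial_z$ (these are the interior generator and boundary operator of the reflected system after the change of variables $u=xz^{-1/3}$, $v=yz^{-1/3}$). *)

theory Defs
  imports "HOL-Analysis.Analysis"
begin

definition pd_u :: "(real \<Rightarrow> real \<Rightarrow> real \<Rightarrow> real) \<Rightarrow> real \<Rightarrow> real \<Rightarrow> real \<Rightarrow> real" where
  "pd_u f u v z = deriv (\<lambda>s. f s v z) u"

definition pd_v :: "(real \<Rightarrow> real \<Rightarrow> real \<Rightarrow> real) \<Rightarrow> real \<Rightarrow> real \<Rightarrow> real \<Rightarrow> real" where
  "pd_v f u v z = deriv (\<lambda>s. f u s z) v"

definition pd_z :: "(real \<Rightarrow> real \<Rightarrow> real \<Rightarrow> real) \<Rightarrow> real \<Rightarrow> real \<Rightarrow> real \<Rightarrow> real" where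
  "pd_z f u v z = deriv (\<lambda>s. f u v s) z"

definition pd_uu :: "(real \<Rightarrow> real \<Rightarrow> real \<Rightarrow> real) \<Rightarrow> real \<Rightarrow> real \<Rightarrow> real \<Rightarrow> real" where
  "pd_uu f u v z = deriv (\<lambda>s. deriv (\<lambda>t. f t v z) s) u"

definition pd_vv :: "(real \<Rightarrow> real \<Rightarrow> real \<Rightarrow> real) \<Rightarrow> real \<Rightarrow> real \<Rightarrow> real \<Rightarrow> real" where
  "pd_vv f u v z = deriv (\<lambda>s. deriv (\<lambda>t. f u t z) s) v"

definition alpha_h :: "real \<Rightarrow> real" where
  "alpha_h h = 1/3 + 2/3 * h"

definition opL :: "real \<Rightarrow> real \<Rightarrow> real \<Rightarrow> real \<Rightarrow> (real \<Rightarrow> real \<Rightarrow> real \<Rightarrow> real)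
    \<Rightarrow> real \<Rightarrow> real \<Rightarrow> real \<Rightarrow> real" where
  "opL \<gamma> h \<kappa>1 \<kappa>2 f u v z =
     - \<gamma> * u * pd_u f u v z - \<gamma> * v * pd_v f u v z
     - (alpha_h h * u^2 - v^2) / z powr (2/3) * pd_u f u v z
     - (alpha_h h + 1) * u * v / z powr (2/3) * pd_v f u v z
     + (1 - h) * u * z powr (1/3) * pd_z f u v z
     + \<kappa>1 / z powr (2/3) * pd_uu f u v z
     + \<kappa>2 / z powr (2/3) * pd_vv f u v z"

definition opQ :: "(real \<Rightarrow> real \<Rightarrow> real \<Rightarrow> real) \<Rightarrow> real \<Rightarrow> real \<Rightarrow> real \<Rightarrow> real" where
  "opQ f u v z = u / (3*z) * pd_u f u v z + v / (3*z) * pd_v f u v z - pd_z f u v z"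

definition phi0 :: "real \<Rightarrow> real \<Rightarrow> real \<Rightarrow> real \<Rightarrow> real \<Rightarrow> real" where
  "phi0 p q u v z = sqrt (u^2 + v^2) powr p * z powr q"

end

theory Submission
  imports Defs
begin

(* With r = sqrt (u^2 + v^2), the drift of L maps r^p z^q to -(alpha_h p - (1 - h) q) u r^p z^(q-2/3)
   exactly, the u^2 - v^2 and u v coefficients combining into a multiple of r^2. In the cone
   |v| <= C u one has u >= r / sqrt (1 + C^2), so this term is at most -beta r^(p+1) z^(q-2/3) / sqrt (1 + C^2),
   while the diffusion terms are O(r^(p-2) z^(q-2/3)) and eat at most half of it once r^3 is large.
   On z = 1 the boundary operator gives Q(r^p z^q) = (p/3 - q) r^p, and since p2 > p1 the term
   p1/3 r^p1 is eventually dominated by (q2/2 - p2/6) r^p2. *)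

lemma phi0_swap: "phi0 p q u v z = phi0 p q v u z"
  by (simp add: phi0_def add.commute)

lemma has_real_derivative_phi0_u:
  assumes "u^2 + v^2 > 0"
  shows "((\<lambda>s. phi0 p q s v z) has_real_derivative
           p * sqrt (u^2 + v^2) powr (p - 2) * u * z powr q) (at u)"
proof -
  have r_pos: "sqrt (u^2 + v^2) > 0"
    using assms by simp
  have chain_rule: "((\<lambda>s. sqrt (s^2 + v^2) powr p * z powr q) has_real_derivative
          p * sqrt (u^2 + v^2) powr (p - 1) * (inverse (sqrt (u^2 + v^2)) / 2 * (2 * u)) * z powr q) (at u)"
    using assms r_pos
    by (auto intro!: DERIV_cmult_right DERIV_fun_powr[where g = "\<lambda>s. sqrt (s^2 + v^2)", simplified]
        DERIV_chain2[OF DERIV_real_sqrt] derivative_eq_intros)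
  have derivative_eq: "p * sqrt (u^2 + v^2) powr (p - 1) * (inverse (sqrt (u^2 + v^2)) / 2 * (2 * u)) * z powr q
      = p * sqrt (u^2 + v^2) powr (p - 2) * u * z powr q"
    using r_pos by (simp add: powr_diff field_simps)
  show ?thesis
    unfolding phi0_def using chain_rule[unfolded derivative_eq] .
qed

lemma has_real_derivative_phi0_v:
  assumes "u^2 + v^2 > 0"
  shows "((\<lambda>s. phi0 p q u s z) has_real_derivative
           p * sqrt (u^2 + v^2) powr (p - 2) * v * z powr q) (at v)"
  using has_real_derivative_phi0_u[of v u p q z] assms by (simp add: phi0_swap[of _ _ u] add.commute)

lemma has_real_derivative_phi0_z:
  assumes "z > 0"
  shows "((\<lambda>s. phi0 p q u v s) has_real_derivative
           sqrt (u^2 + v^2) powr p * (q * z powr (q - 1))) (at z)"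
  unfolding phi0_def using assms by (intro DERIV_cmult has_real_derivative_powr)

lemma pd_u_phi0:
  "u^2 + v^2 > 0 \<Longrightarrow> pd_u (phi0 p q) u v z = p * sqrt (u^2 + v^2) powr (p - 2) * u * z powr q"
  unfolding pd_u_def by (rule DERIV_imp_deriv[OF has_real_derivative_phi0_u])

lemma pd_v_phi0:
  "u^2 + v^2 > 0 \<Longrightarrow> pd_v (phi0 p q) u v z = p * sqrt (u^2 + v^2) powr (p - 2) * v * z powr q"
  unfolding pd_v_def by (rule DERIV_imp_deriv[OF has_real_derivative_phi0_v])

lemma pd_z_phi0:
  "z > 0 \<Longrightarrow> pd_z (phi0 p q) u v z = sqrt (u^2 + v^2) powr p * (q * z powr (q - 1))"
  unfolding pd_z_def by (rule DERIV_imp_deriv[OF has_real_derivative_phi0_z])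

lemma pd_uu_phi0:
  assumes "u^2 + v^2 > 0"
  shows "pd_uu (phi0 p q) u v z = p * z powr q *
           (sqrt (u^2 + v^2) powr (p - 2) + (p - 2) * u^2 * sqrt (u^2 + v^2) powr (p - 4))"
proof -
  have "open {s. 0 < s^2 + v^2}"
    by (intro open_Collect_less continuous_intros)
  then have "\<forall>\<^sub>F s in nhds u. deriv (\<lambda>t. phi0 p q t v z) s = p * sqrt (s^2 + v^2) powr (p - 2) * s * z powr q"
    using assms unfolding eventually_nhds
    by (intro exI[of _ "{s. 0 < s^2 + v^2}"]) (auto intro: DERIV_imp_deriv has_real_derivative_phi0_u)
  then have "pd_uu (phi0 p q) u v z = deriv (\<lambda>s. p * sqrt (s^2 + v^2) powr (p - 2) * s * z powr q) u"
    unfolding pd_uu_def by (rule deriv_cong_ev) simp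
  moreover have r_pos: "sqrt (u^2 + v^2) > 0"
    using assms by simp
  then have "sqrt (u^2 + v^2) powr (p - 4) = sqrt (u^2 + v^2) powr (p - 3) * inverse (sqrt (u^2 + v^2))"
    using powr_diff[of "sqrt (u^2 + v^2)" "p - 3" 1] by (simp add: divide_inverse)
  then have "((\<lambda>s. p * sqrt (s^2 + v^2) powr (p - 2) * s * z powr q) has_real_derivative
      p * z powr q * (sqrt (u^2 + v^2) powr (p - 2) + (p - 2) * u^2 * sqrt (u^2 + v^2) powr (p - 4))) (at u)"
    using assms r_pos
    by (auto intro!: derivative_eq_intros) (simp add: algebra_simps divide_inverse power2_eq_square)
  ultimately show ?thesis
    by (simp add: DERIV_imp_deriv)
qed

lemma pd_vv_phi0:
  assumes "u^2 + v^2 > 0"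
  shows "pd_vv (phi0 p q) u v z = p * z powr q *
           (sqrt (u^2 + v^2) powr (p - 2) + (p - 2) * v^2 * sqrt (u^2 + v^2) powr (p - 4))"
proof -
  have "pd_vv (phi0 p q) u v z = pd_uu (phi0 p q) v u z"
    unfolding pd_vv_def pd_uu_def by (simp add: phi0_swap)
  with pd_uu_phi0[of v u p q z] assms show ?thesis
    by (simp add: add.commute)
qed

lemma opL_phi0:
  assumes "u^2 + v^2 > 0" and "z > 0"
  defines "r \<equiv> sqrt (u^2 + v^2)"
  shows "opL \<gamma> h \<kappa>1 \<kappa>2 (phi0 P Q) u v z =
           - \<gamma> * P * r powr P * z powr Q
           + z powr (Q - 2/3) *
             (P * (\<kappa>1 + \<kappa>2) * r powr (P - 2)
              + P * (P - 2) * (\<kappa>1 * u^2 + \<kappa>2 * v^2) * r powr (P - 4)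
              - (alpha_h h * P - (1 - h) * Q) * u * r powr P)"
proof -
  define Z where "Z = z powr (Q - 2/3)"
  define w where "w = z powr (1/3)"
  have "r > 0"
    using assms by simp
  then have r_pow: "r powr P = r powr (P - 2) * (u^2 + v^2)"
    using powr_diff[of r P 2] assms(1) by (simp add: r_def powr_numeral)
  have w2: "z powr (2/3) = w^2"
    using powr_add[of z "1/3" "1/3"] by (simp add: w_def power2_eq_square)
  have w_pow: "z powr Q = Z * w^2" "z powr (Q - 1) = Z / w"
    using powr_add[of z "Q - 2/3" "2/3"] powr_diff[of z "Q - 2/3" "1/3"]
    by (simp_all add: w2 flip: Z_def w_def)
  have "w > 0"
    using \<open>z > 0\<close> by (simp add: w_def)
  then show ?thesis
    unfolding opL_def pd_u_phi0[OF assms(1)] pd_v_phi0[OF assms(1)] pd_z_phi0[OF assms(2)]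
      pd_uu_phi0[OF assms(1)] pd_vv_phi0[OF assms(1)] r_def[symmetric] Z_def[symmetric]
      w_def[symmetric] r_pow w2 w_pow
    by (simp add: field_simps power2_eq_square)
qed

lemma cone_radius_le:
  fixes C u v :: real
  assumes "\<bar>v\<bar> \<le> C * u" and "C > 0"
  shows "sqrt (u^2 + v^2) \<le> sqrt (1 + C^2) * u"
proof -
  have "u \<ge> 0"
    using assms by (smt (verit) zero_le_mult_iff)
  have "v^2 \<le> (C * u)^2"
    using assms by (metis abs_le_square_iff abs_of_nonneg abs_ge_zero order_trans)
  then have "sqrt (u^2 + v^2) \<le> sqrt ((1 + C^2) * u^2)"
    by (intro real_sqrt_le_mono) (simp add: algebra_simps power_mult_distrib)
  also have "\<dots> = sqrt (1 + C^2) * u"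
    using \<open>u \<ge> 0\<close> by (simp add: real_sqrt_mult)
  finally show ?thesis .
qed

lemma opL_phi0_le:
  assumes "\<kappa>1 > 0" and "\<kappa>2 > 0" and "P > 0" and "\<beta> > 0"
    and \<beta>_eq: "\<beta> = alpha_h h * P - (1 - h) * Q"
    and cone: "\<bar>v\<bar> \<le> C * u" and "C > 0" and "z > 0"
    and large: "2 * sqrt (1 + C^2) * P * (\<kappa>1 + \<kappa>2) * (1 + \<bar>P - 2\<bar>) / \<beta>
                  \<le> sqrt (u^2 + v^2) ^ 3"
  shows "opL \<gamma> h \<kappa>1 \<kappa>2 (phi0 P Q) u v z
           \<le> - \<gamma> * P * sqrt (u^2 + v^2) powr P * z powr Q
             - \<beta> / (2 * sqrt (1 + C^2)) * sqrt (u^2 + v^2) powr (P + 1) * z powr (Q - 2/3)"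
proof -
  define r where "r = sqrt (u^2 + v^2)"
  define s where "s = sqrt (1 + C^2)"
  define K where "K = \<kappa>1 * u^2 + \<kappa>2 * v^2"
  define X where "X = P * (\<kappa>1 + \<kappa>2) * (1 + \<bar>P - 2\<bar>)"
  have "s > 0"
    by (simp add: s_def add_pos_nonneg)
  have "X > 0"
    using assms(1-3) by (simp add: X_def add_pos_nonneg)
  have X_le: "X \<le> \<beta> / (2 * s) * r^3"
    using large \<open>s > 0\<close> \<open>\<beta> > 0\<close> unfolding X_def r_def[symmetric] s_def[symmetric]
    by (simp add: field_simps)
  then have "0 < \<beta> / (2 * s) * r^3"
    using \<open>X > 0\<close> by linarith
  then have "r \<noteq> 0"
    by auto
  moreover have "r \<ge> 0"
    by (simp add: r_def)
  ultimately have "r > 0"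
    by simp
  have r2: "r^2 = u^2 + v^2"
    by (simp add: r_def)
  then have "u^2 + v^2 > 0"
    using \<open>r > 0\<close> by (metis zero_less_power)
  have r_pow: "r powr P = r powr (P - 2) * r^2" "r powr (P - 4) = r powr (P - 2) / r^2"
      "r powr (P + 1) = r powr (P - 2) * r^3"
    using \<open>r > 0\<close> powr_diff[of r P 2] powr_diff[of r "P - 2" 2] powr_add[of r "P - 2" 3]
    by (simp_all add: powr_numeral add.commute)
  have "0 \<le> \<kappa>1 * v^2" and "0 \<le> \<kappa>2 * u^2" and "0 \<le> K"
    using assms(1,2) by (simp_all add: K_def)
  then have "K \<le> (\<kappa>1 + \<kappa>2) * r^2"
    unfolding K_def r2 by (simp add: algebra_simps)
  then have "0 \<le> K / r^2" and "K / r^2 \<le> \<kappa>1 + \<kappa>2"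
    using \<open>0 \<le> K\<close> \<open>r > 0\<close> by (simp_all add: pos_divide_le_eq)
  then have "(P - 2) * (K / r^2) \<le> \<bar>P - 2\<bar> * (\<kappa>1 + \<kappa>2)"
    by (meson abs_ge_self abs_ge_zero mult_left_mono mult_right_mono order_trans)
  then have "P * ((P - 2) * (K / r^2)) \<le> P * (\<bar>P - 2\<bar> * (\<kappa>1 + \<kappa>2))"
    using assms(3) by (intro mult_left_mono) auto
  then have diffusion: "P * (\<kappa>1 + \<kappa>2) + P * (P - 2) * K / r^2 \<le> X"
    by (simp add: X_def algebra_simps)
  have "r / s \<le> u"
    using cone_radius_le[OF cone \<open>C > 0\<close>] \<open>s > 0\<close>
    by (simp add: divide_le_eq mult.commute r_def s_def)
  then have drift: "\<beta> / s * r^3 \<le> \<beta> * u * r^2"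
    using mult_left_mono[of "r / s" u "\<beta> * r^2"] \<open>\<beta> > 0\<close>
    by (simp add: power2_eq_square power3_eq_cube algebra_simps)
  have bracket: "P * (\<kappa>1 + \<kappa>2) + P * (P - 2) * K / r^2 - \<beta> * u * r^2 \<le> - \<beta> / (2 * s) * r^3"
    using diffusion drift X_le by (simp add: field_simps)
  have "opL \<gamma> h \<kappa>1 \<kappa>2 (phi0 P Q) u v z = - \<gamma> * P * r powr P * z powr Q
      + z powr (Q - 2/3) * (P * (\<kappa>1 + \<kappa>2) * r powr (P - 2) + P * (P - 2) * K * r powr (P - 4)
                             - \<beta> * u * r powr P)"
    using opL_phi0[OF \<open>u^2 + v^2 > 0\<close> \<open>z > 0\<close>, folded r_def] by (simp add: K_def \<beta>_eq)
  also have "\<dots> = - \<gamma> * P * r powr P * z powr Q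
      + z powr (Q - 2/3) * r powr (P - 2) * (P * (\<kappa>1 + \<kappa>2) + P * (P - 2) * K / r^2 - \<beta> * u * r^2)"
    unfolding r_pow(1,2) by (simp add: algebra_simps)
  also have "\<dots> \<le> - \<gamma> * P * r powr P * z powr Q + z powr (Q - 2/3) * r powr (P - 2) * (- \<beta> / (2 * s) * r^3)"
    using mult_left_mono[OF bracket, of "z powr (Q - 2/3) * r powr (P - 2)"] by simp
  finally show ?thesis
    unfolding r_def[symmetric] s_def[symmetric] r_pow(3) by (simp add: algebra_simps)
qed

lemma phi0_field_differentiable:
  assumes "u^2 + v^2 > 0" and "z > 0"
  shows "(\<lambda>s. phi0 p q s v z) field_differentiable at u"
    and "(\<lambda>s. phi0 p q u s z) field_differentiable at v"
    and "(\<lambda>s. phi0 p q u v s) field_differentiable at z"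
  using has_real_derivative_phi0_u[OF assms(1)] has_real_derivative_phi0_v[OF assms(1)]
    has_real_derivative_phi0_z[OF assms(2)]
  unfolding field_differentiable_def by blast+

lemma opQ_add:
  assumes "(\<lambda>s. f s v z) field_differentiable at u" and "(\<lambda>s. g s v z) field_differentiable at u"
    and "(\<lambda>s. f u s z) field_differentiable at v" and "(\<lambda>s. g u s z) field_differentiable at v"
    and "(\<lambda>s. f u v s) field_differentiable at z" and "(\<lambda>s. g u v s) field_differentiable at z"
  shows "opQ (\<lambda>a b c. f a b c + g a b c) u v z = opQ f u v z + opQ g u v z"
  using assms unfolding opQ_def pd_u_def pd_v_def pd_z_def by (simp add: algebra_simps)

lemma opQ_phi0:
  assumes "u^2 + v^2 > 0" and "z > 0"
  shows "opQ (phi0 P Q) u v z = (P / 3 - Q) * sqrt (u^2 + v^2) powr P * z powr (Q - 1)"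
proof -
  define r where "r = sqrt (u^2 + v^2)"
  have "r > 0"
    using assms by (simp add: r_def)
  then have "r powr P = r powr (P - 2) * (u^2 + v^2)"
    using powr_diff[of r P 2] assms(1) by (simp add: r_def powr_numeral)
  moreover have "z powr Q = z powr (Q - 1) * z"
    using powr_add[of z "Q - 1" 1] assms(2) by simp
  ultimately show ?thesis
    using assms unfolding opQ_def pd_u_phi0[OF assms(1)] pd_v_phi0[OF assms(1)] pd_z_phi0[OF assms(2)]
      r_def[symmetric]
    by (simp add: field_simps power2_eq_square)
qed

lemma opQ_phi0_sum_le:
  fixes p1 p2 q2 :: real
  assumes "u^2 + v^2 > 0" and "q2 / 2 - p2 / 6 > 0"
    and large: "p1 / (3 * (q2 / 2 - p2 / 6)) \<le> sqrt (u^2 + v^2) powr (p2 - p1)"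
  shows "opQ (\<lambda>a b c. phi0 p1 0 a b c + phi0 p2 q2 a b c) u v 1
           \<le> - (q2 / 2 - p2 / 6) * sqrt (u^2 + v^2) powr p2"
proof -
  define r where "r = sqrt (u^2 + v^2)"
  define d where "d = q2 / 2 - p2 / 6"
  have "r > 0" and "d > 0"
    using assms(1,2) by (simp_all add: r_def d_def)
  have "opQ (\<lambda>a b c. phi0 p1 0 a b c + phi0 p2 q2 a b c) u v 1
      = p1 / 3 * r powr p1 + (p2 / 3 - q2) * r powr p2"
    using assms(1) by (simp add: opQ_add phi0_field_differentiable opQ_phi0 r_def)
  moreover have "p1 / 3 \<le> d * r powr (p2 - p1)"
    using large \<open>d > 0\<close> by (simp add: r_def d_def field_simps)
  then have "p1 / 3 * r powr p1 \<le> d * r powr (p2 - p1) * r powr p1"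
    using \<open>r > 0\<close> by (intro mult_right_mono) auto
  then have "p1 / 3 * r powr p1 \<le> d * r powr p2"
    by (simp add: mult.assoc flip: powr_add)
  ultimately show ?thesis
    unfolding r_def[symmetric] by (simp add: d_def algebra_simps)
qed

lemma eventually_le_powr_at_top:
  fixes a e :: real
  assumes "e > 0"
  shows "\<forall>\<^sub>F r in at_top. a \<le> r powr e"
  using eventually_ge_at_top[of "\<bar>a\<bar> powr (1 / e)"]
proof (rule eventually_mono)
  fix r
  assume "\<bar>a\<bar> powr (1 / e) \<le> r"
  then have "(\<bar>a\<bar> powr (1 / e)) powr e \<le> r powr e"
    using assms by (intro powr_mono2) auto
  then show "a \<le> r powr e"
    using assms by (simp add: powr_powr)
qed

theorem lemma6p1:
  fixes \<gamma> h \<kappa>1 \<kappa>2 C :: real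
    and p q \<alpha> \<beta> :: "nat \<Rightarrow> real"
  assumes "\<gamma> > 0" and "0 < h" and "h < 1" and "\<kappa>1 > 0" and "\<kappa>2 > 0"
    and "p 1 > 0" and "p 2 > 0" and "q 1 = 0" and "q 2 > 0"
    and "\<forall>i\<in>{1,2}. 0 < \<beta> i \<and> \<beta> i = alpha_h h * p i - (1 - h) * q i
                     \<and> \<beta> i < \<alpha> i \<and> \<alpha> i < 1"
    and "q 2 > p 2 / 3 + \<alpha> 2 / 2"
    and "p 2 > p 1"
    and "p 2 + 3/2 * \<alpha> 2 > p 1 + 3/2 * \<alpha> 1"
    and "C > 0"
  shows "\<forall>\<^sub>F rs in at_top.
     (\<forall>u v z. rs \<le> sqrt (u^2 + v^2) \<and> \<bar>v\<bar> \<le> C * u \<and> 0 < z \<and> z \<le> 1 \<longrightarrow>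
        (\<forall>i\<in>{1,2::nat}.
           opL \<gamma> h \<kappa>1 \<kappa>2 (phi0 (p i) (q i)) u v z
             \<le> - \<gamma> * p i * sqrt (u^2 + v^2) powr (p i) * z powr (q i)
               - \<beta> i / (2 * sqrt (1 + C^2)) * sqrt (u^2 + v^2) powr (p i + 1)
                   * z powr (q i - 2/3)))
   \<and> (\<forall>u v. rs \<le> sqrt (u^2 + v^2) \<and> \<bar>v\<bar> \<le> C * u \<longrightarrow>
        opQ (\<lambda>a b c. phi0 (p 1) (q 1) a b c + phi0 (p 2) (q 2) a b c) u v 1
          \<le> - (q 2 / 2 - p 2 / 6) * sqrt (u^2 + v^2) powr (p 2))"
proof -
  have \<beta>: "0 < \<beta> i" "\<beta> i = alpha_h h * p i - (1 - h) * q i" if "i \<in> {1, 2}" for i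
    using assms(10) that by auto
  have "q 2 / 2 - p 2 / 6 > 0"
    using assms(10,11) by auto
  define X where "X i = 2 * sqrt (1 + C^2) * p i * (\<kappa>1 + \<kappa>2) * (1 + \<bar>p i - 2\<bar>) / \<beta> i" for i
  define large where "large r \<longleftrightarrow> 0 < r \<and> max (X 1) (X 2) \<le> r ^ 3
      \<and> p 1 / (3 * (q 2 / 2 - p 2 / 6)) \<le> r powr (p 2 - p 1)" for r :: real
  have "filterlim (\<lambda>r::real. r ^ 3) at_top at_top"
    by (intro filterlim_pow_at_top filterlim_ident) simp
  then have "\<forall>\<^sub>F r in at_top. max (X 1) (X 2) \<le> r ^ 3"
    unfolding filterlim_at_top by blast
  then have "\<forall>\<^sub>F r in at_top. large r"
    unfolding large_def using assms(12)
    by (intro eventually_conj eventually_gt_at_top eventually_le_powr_at_top) auto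
  then show ?thesis
  proof (rule eventually_mono[OF eventually_all_ge_at_top], intro conjI allI impI ballI)
    fix rs u v z :: real and i :: nat
    assume "\<forall>r\<ge>rs. large r" and "rs \<le> sqrt (u^2 + v^2) \<and> \<bar>v\<bar> \<le> C * u \<and> 0 < z \<and> z \<le> 1"
      and "i \<in> {1, 2}"
    then show "opL \<gamma> h \<kappa>1 \<kappa>2 (phi0 (p i) (q i)) u v z
        \<le> - \<gamma> * p i * sqrt (u^2 + v^2) powr (p i) * z powr (q i)
          - \<beta> i / (2 * sqrt (1 + C^2)) * sqrt (u^2 + v^2) powr (p i + 1) * z powr (q i - 2/3)"
      using assms(4-7,14) \<beta> by (intro opL_phi0_le) (auto simp: large_def X_def)
  next
    fix rs u v :: real
    assume "\<forall>r\<ge>rs. large r" and "rs \<le> sqrt (u^2 + v^2) \<and> \<bar>v\<bar> \<le> C * u"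
    then show "opQ (\<lambda>a b c. phi0 (p 1) (q 1) a b c + phi0 (p 2) (q 2) a b c) u v 1
        \<le> - (q 2 / 2 - p 2 / 6) * sqrt (u^2 + v^2) powr (p 2)"
      using \<open>q 2 / 2 - p 2 / 6 > 0\<close> unfolding \<open>q 1 = 0\<close>
      by (intro opQ_phi0_sum_le) (auto simp: large_def)
  qed
qed

end
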